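(* Let $d\in\mathbb{Z}^+$, $f\in\{0,\dots,d-1\}$, let $C_0\in\mathcal{C}_{\le d}$ be irreducible and let $B\subseteq\mathbb{R}^2$ with $|B|\le\binom{d+2}{2}-1$. Then for all $(e,D)\in I(B,C_0)$, \[ |C_0\cap U_e(B,D)|\le 2d^2. \]
   Context: For $k\in\mathbb{Z}^+$, a curve of degree $k$ is the zero set in $\mathbb{R}^2$ of a polynomial in $\mathbb{R}[x,y]$ of degree exactly $k$; $\mathcal{C}_k$ is the family of such curves and $\mathcal{C}_{\le k}:=\bigcup_{j=1}^k\mathcal{C}_j$. A curve is irreducible if it is the zero set of an irreducible polynomial. For $k\in\mathbb{Z}^+$ let $I_k=\{(i,j)\in\mathbb{Z}_{\ge 0}^2: 1\le i+j\le k\}$ and $\psi_k:\mathbb{R}^2\to\mathbb{R}^{\binom{k+2}{2}-1}$, $\psi_k(a_1,a_2)=(a_1^ia_2^j)_{(i,j)\in I_k}$. $\mathrm{Fl}(S)$ is the affine hull of $S$ ($\mathrm{Fl}(\emptyset)=\emptyset$, $\dim\emptyset=-1$); $\mathcal{P}(X)$ is the power set. With $d$ fixed, for $e\in\{1,\dots,d-1\}$, $B\subseteq\mathbb{R}^2$, $D\subseteq B$: $V_e(D):=\mathrm{Fl}(\psi_e(D))$; $V_d(B):=\mathrm{Fl}(\psi_d(B))$; $W_e(B,D):=\mathrm{Fl}\big(\psi_{d-e}(B\setminus\psi_e^{-1}(V_e(D)))\big)$; $\alpha_e(D):=\binom{e+2}{2}-2-\dim V_e(D)$; $\beta_e(B,D):=\binom{d-e+2}{2}-3-\dim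 W_e(B,D)$; $U_e(B,D):=\psi_d^{-1}(V_d(B))$ if $\alpha_e(D)<0$; $:=\psi_d^{-1}(V_d(B))\cup\psi_e^{-1}(V_e(D))$ if $\beta_e(B,D)<0\le\alpha_e(D)$; $:=\psi_d^{-1}(V_d(B))\cup\psi_e^{-1}(V_e(D))\cup\psi_{d-e}^{-1}(W_e(B,D))$ if $\alpha_e(D),\beta_e(B,D)\ge0$; and for $C\subseteq\mathbb{R}^2$, $I(B,C):=\{(f',E)\in\{1,\dots,d-1\}\times\mathcal{P}(B): C\not\subseteq U_{f'}(B,E)\}$. *)

theory Defs
  imports "HOL-Analysis.Analysis" "HOL-Computational_Algebra.Polynomial"
begin

(* Bivariate real polynomials, represented as R[x][y] = real poly poly
   (outer variable y, coefficients are polynomials in x). *)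
type_synonym bpoly = "real poly poly"

definition bpeval :: "bpoly \<Rightarrow> real \<Rightarrow> real \<Rightarrow> real" where
  "bpeval p a b = poly (map_poly (\<lambda>c. poly c a) p) b"

(* total degree (for p \<noteq> 0) *)
definition totdeg :: "bpoly \<Rightarrow> nat" where
  "totdeg p = Max {i + j | i j. coeff (coeff p j) i \<noteq> 0}"

definition zero_set :: "bpoly \<Rightarrow> (real \<times> real) set" where
  "zero_set p = {(a, b). bpeval p a b = 0}"

definition curves_deg :: "nat \<Rightarrow> (real \<times> real) set set" where
  "curves_deg k = {S. \<exists>p. p \<noteq> 0 \<and> totdeg p = k \<and> S = zero_set p}"

definition curves_le :: "nat \<Rightarrow> (real \<times> real) set set" where
  "curves_le k = (\<Union>j\<in>{1..k}. curves_deg j)"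

definition irreducible_curve :: "(real \<times> real) set \<Rightarrow> bool" where
  "irreducible_curve S \<longleftrightarrow> (\<exists>p. irreducible p \<and> S = zero_set p)"

(* Vectors in R^{I_k} are represented as functions nat \<times> nat \<Rightarrow> real
   vanishing outside I_k. *)
type_synonym vect = "nat \<times> nat \<Rightarrow> real"

definition psi :: "nat \<Rightarrow> real \<times> real \<Rightarrow> vect" where
  "psi k a = (\<lambda>(i, j). if 1 \<le> i + j \<and> i + j \<le> k then fst a ^ i * snd a ^ j else 0)"

definition Fl :: "vect set \<Rightarrow> vect set" where
  "Fl S = {x. \<exists>T u. finite T \<and> T \<subseteq> S \<and> sum u T = 1 \<and>
                    x = (\<lambda>i. \<Sum>v\<in>T. u v * v i)}"

definition lin_indep :: "vect set \<Rightarrow> bool" where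
  "lin_indep T \<longleftrightarrow> (\<forall>u. (\<lambda>i. \<Sum>v\<in>T. u v * v i) = (\<lambda>i. 0) \<longrightarrow> (\<forall>v\<in>T. u v = 0))"

definition affdim :: "vect set \<Rightarrow> int" where
  "affdim A = (if A = {} then -1 else
     int (GREATEST n. \<exists>T. finite T \<and> card T = n \<and> lin_indep T \<and>
                         T \<subseteq> {(\<lambda>i. x i - y i) | x y. x \<in> A \<and> y \<in> A}))"

definition Vset :: "nat \<Rightarrow> (real \<times> real) set \<Rightarrow> vect set" where
  "Vset e D = Fl (psi e ` D)"

definition Wset :: "nat \<Rightarrow> nat \<Rightarrow> (real \<times> real) set \<Rightarrow> (real \<times> real) set \<Rightarrow> vect set" where
  "Wset d e B D = Fl (psi (d - e) ` (B - psi e -` Vset e D))"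

definition alpha :: "nat \<Rightarrow> (real \<times> real) set \<Rightarrow> int" where
  "alpha e D = int ((e + 2) choose 2) - 2 - affdim (Vset e D)"

definition beta :: "nat \<Rightarrow> nat \<Rightarrow> (real \<times> real) set \<Rightarrow> (real \<times> real) set \<Rightarrow> int" where
  "beta d e B D = int ((d - e + 2) choose 2) - 3 - affdim (Wset d e B D)"

definition Uset :: "nat \<Rightarrow> nat \<Rightarrow> (real \<times> real) set \<Rightarrow> (real \<times> real) set \<Rightarrow> (real \<times> real) set" where
  "Uset d e B D =
     (if alpha e D < 0 then psi d -` Vset d B
      else if beta d e B D < 0 then psi d -` Vset d B \<union> psi e -` Vset e D
      else psi d -` Vset d B \<union> psi e -` Vset e D \<union> psi (d - e) -` Wset d e B D)"

definition Iset :: "nat \<Rightarrow> (real \<times> real) set \<Rightarrow> (real \<times> real) set \<Rightarrow> (nat \<times> (real \<times> real) set) set" where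
  "Iset d B C = {(f', E). f' \<in> {1..d - 1} \<and> E \<subseteq> B \<and> \<not> C \<subseteq> Uset d f' B E}"

end

theory Submission
  imports Defs "HOL-Library.Function_Algebras" "HOL-Computational_Algebra.Polynomial_Factorial"
    "HOL-Computational_Algebra.Field_as_Ring"
begin

(* Every piece of U_e(B, D) has the form psi_k^-1(Fl(psi_k S)) with k in {d, e, d - e}, and a
   point c of C_0 outside U_e(B, D) has psi_k c outside Fl(psi_k S). A linear functional
   separating them is a polynomial Q of degree at most k that vanishes on the piece but not at c,
   so the irreducible p with C_0 = Z(p) does not divide Q. If C_0 is infinite, p divides the
   defining polynomial of C_0, so deg p <= d, and Bezout's bound gives at most d k points of C_0
   on the piece; the degrees of the pieces add up to at most 2 d.
   If C_0 is finite, every zero of an irreducible factor of degree m is also a zero of its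
   x-derivative (a transversal zero would spread, by the intermediate value theorem, to
   infinitely many), so Bezout bounds their number by m^2; these bounds add up to at most d^2.
   Bezout's bound itself is a dimension count in spaces of polynomials of bounded degree. *)

section \<open>Bivariate polynomials\<close>

lemma bpeval_conv_poly: "bpeval p a b = poly (poly p [:b:]) a"
  unfolding bpeval_def by (induction p) (auto simp: map_poly_pCons)

lemma bpeval_mult [simp]: "bpeval (p * q) a b = bpeval p a b * bpeval q a b"
  and bpeval_add [simp]: "bpeval (p + q) a b = bpeval p a b + bpeval q a b"
  and bpeval_0 [simp]: "bpeval 0 a b = 0"
  and bpeval_1 [simp]: "bpeval 1 a b = 1"
  and bpeval_const [simp]: "bpeval [:[:c:]:] a b = c"
  and bpeval_smult [simp]: "bpeval (smult [:c:] p) a b = c * bpeval p a b"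
  by (simp_all add: bpeval_conv_poly)

lemma bpeval_sum: "bpeval (sum f S) a b = (\<Sum>x\<in>S. bpeval (f x) a b)"
  by (induction S rule: infinite_finite_induct) auto

lemma bpeval_prod: "bpeval (prod f S) a b = (\<Prod>x\<in>S. bpeval (f x) a b)"
  by (induction S rule: infinite_finite_induct) auto

lemma zero_set_mult: "zero_set (p * q) = zero_set p \<union> zero_set q"
  by (auto simp: zero_set_def)

definition bcoeff :: "bpoly \<Rightarrow> nat \<times> nat \<Rightarrow> real" where
  "bcoeff p m = coeff (coeff p (snd m)) (fst m)"

definition bmonom :: "nat \<times> nat \<Rightarrow> bpoly" where
  "bmonom m = monom (monom 1 (fst m)) (snd m)"

definition bscale :: "real \<Rightarrow> bpoly \<Rightarrow> bpoly" where
  "bscale c p = smult [:c:] p"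

interpretation bpoly: vector_space bscale
proof unfold_locales
  fix a b :: real and p q :: bpoly
  have "[:a + b:] = [:a:] + [:b:]" by simp
  then show "bscale (a + b) p = bscale a p + bscale b p"
    by (simp add: bscale_def smult_add_left del: add_pCons)
qed (simp_all add: bscale_def smult_add_right mult.commute flip: one_pCons)

lemma bpeval_bmonom [simp]: "bpeval (bmonom (i, j)) a b = a ^ i * b ^ j"
  by (simp add: bpeval_def bmonom_def map_poly_monom poly_monom)

lemma bpeval_bscale [simp]: "bpeval (bscale c p) a b = c * bpeval p a b"
  by (simp add: bscale_def)

lemma bcoeff_bmonom: "bcoeff (bmonom m) m' = (if m = m' then 1 else 0)"
  by (cases m; cases m') (auto simp: bcoeff_def bmonom_def coeff_monom)

lemma bcoeff_add [simp]: "bcoeff (p + q) m = bcoeff p m + bcoeff q m"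
  and bcoeff_0 [simp]: "bcoeff 0 m = 0"
  and bcoeff_bscale [simp]: "bcoeff (bscale c p) m = c * bcoeff p m"
  by (simp_all add: bcoeff_def bscale_def)

lemma bcoeff_sum: "bcoeff (sum f S) m = (\<Sum>x\<in>S. bcoeff (f x) m)"
  by (induction S rule: infinite_finite_induct) auto

lemma bcoeff_const: "bcoeff [:[:c:]:] m = (if m = (0, 0) then c else 0)"
  by (cases m) (simp add: bcoeff_def coeff_pCons split: nat.splits)

lemma bpoly_eq_iff_bcoeff: "p = q \<longleftrightarrow> (\<forall>m. bcoeff p m = bcoeff q m)"
  by (auto simp: bcoeff_def poly_eq_iff)

lemma bcoeff_mult: "bcoeff (p * q) (i, j) =
  (\<Sum>j1\<le>j. \<Sum>i1\<le>i. bcoeff p (i1, j1) * bcoeff q (i - i1, j - j1))"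
  by (simp add: bcoeff_def coeff_mult coeff_sum)

lemma bcoeff_lincomb:
  assumes "finite S"
  shows "bcoeff (\<Sum>m\<in>S. bscale (c m) (bmonom m)) m' = (if m' \<in> S then c m' else 0)"
proof -
  have "bcoeff (\<Sum>m\<in>S. bscale (c m) (bmonom m)) m' = (\<Sum>m\<in>S. if m = m' then c m' else 0)"
    unfolding bcoeff_sum by (intro sum.cong) (auto simp: bcoeff_bmonom)
  also have "\<dots> = (if m' \<in> S then c m' else 0)"
    using assms by (simp add: sum.delta')
  finally show ?thesis .
qed

definition totdeg_le :: "bpoly \<Rightarrow> nat \<Rightarrow> bool" where
  "totdeg_le p n \<longleftrightarrow> (\<forall>i j. bcoeff p (i, j) \<noteq> 0 \<longrightarrow> i + j \<le> n)"

lemma finite_bcoeff_support: "finite {m. bcoeff p m \<noteq> 0}"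
proof -
  define M where "M = Max (degree ` coeff p ` {..degree p})"
  have "i \<le> M \<and> j \<le> degree p" if "bcoeff p (i, j) \<noteq> 0" for i j
  proof -
    from that have j: "j \<le> degree p"
      unfolding bcoeff_def by (metis coeff_0 le_degree fst_conv snd_conv)
    from that have "i \<le> degree (coeff p j)"
      unfolding bcoeff_def by (metis le_degree fst_conv snd_conv)
    also have "\<dots> \<le> M" unfolding M_def using j by (intro Max_ge) auto
    finally show ?thesis using j by simp
  qed
  then have "{m. bcoeff p m \<noteq> 0} \<subseteq> {..M} \<times> {..degree p}" by auto
  then show ?thesis by (rule finite_subset) auto
qed

lemma totdeg_conv_bcoeff: "totdeg p = Max ((\<lambda>(i, j). i + j) ` {m. bcoeff p m \<noteq> 0})"
  unfolding totdeg_def bcoeff_def by (rule arg_cong[where f = Max]) force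

lemma le_totdeg: "bcoeff p (i, j) \<noteq> 0 \<Longrightarrow> i + j \<le> totdeg p"
  unfolding totdeg_conv_bcoeff using finite_bcoeff_support
  by (intro Max_ge) (auto intro: image_eqI[where x = "(i, j)"])

lemma totdeg_le_totdeg: "totdeg_le p (totdeg p)"
  using le_totdeg totdeg_le_def by blast

lemma totdeg_attained:
  assumes "p \<noteq> 0"
  obtains i j where "bcoeff p (i, j) \<noteq> 0" "i + j = totdeg p"
proof -
  have "{m. bcoeff p m \<noteq> 0} \<noteq> {}" using assms by (auto simp: bpoly_eq_iff_bcoeff)
  then have "totdeg p \<in> (\<lambda>(i, j). i + j) ` {m. bcoeff p m \<noteq> 0}"
    unfolding totdeg_conv_bcoeff using finite_bcoeff_support by (intro Max_in) auto
  then show ?thesis using that by auto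
qed

lemma totdeg_le_iff:
  assumes "p \<noteq> 0"
  shows "totdeg p \<le> n \<longleftrightarrow> totdeg_le p n"
proof
  show "totdeg p \<le> n \<Longrightarrow> totdeg_le p n"
    using totdeg_le_totdeg unfolding totdeg_le_def by (meson le_trans)
  obtain i j where "bcoeff p (i, j) \<noteq> 0" "i + j = totdeg p"
    using totdeg_attained[OF assms] .
  then show "totdeg_le p n \<Longrightarrow> totdeg p \<le> n" unfolding totdeg_le_def by metis
qed

lemma totdeg_le_mono: "totdeg_le p m \<Longrightarrow> m \<le> n \<Longrightarrow> totdeg_le p n"
  unfolding totdeg_le_def by force

lemma totdeg_le_mult:
  assumes "totdeg_le p m" "totdeg_le q n"
  shows "totdeg_le (p * q) (m + n)"
  unfolding totdeg_le_def
proof (intro allI impI)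
  fix i j assume "bcoeff (p * q) (i, j) \<noteq> 0"
  then obtain j1 i1 where "j1 \<le> j" "i1 \<le> i" "bcoeff p (i1, j1) * bcoeff q (i - i1, j - j1) \<noteq> 0"
    unfolding bcoeff_mult by (metis (no_types, lifting) atMost_iff sum.neutral)
  then have "i1 + j1 \<le> m" "(i - i1) + (j - j1) \<le> n"
    using assms unfolding totdeg_le_def by (metis mult_not_zero)+
  then show "i + j \<le> m + n" using \<open>j1 \<le> j\<close> \<open>i1 \<le> i\<close> by linarith
qed

lemma totdeg_le_add: "totdeg_le p n \<Longrightarrow> totdeg_le q n \<Longrightarrow> totdeg_le (p + q) n"
  unfolding totdeg_le_def by (metis add.right_neutral bcoeff_add)

lemma totdeg_le_bscale: "totdeg_le p n \<Longrightarrow> totdeg_le (bscale c p) n"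
  unfolding totdeg_le_def by simp

lemma totdeg_le_0: "totdeg_le 0 n"
  by (simp add: totdeg_le_def)

lemma totdeg_le_sum: "(\<And>x. x \<in> S \<Longrightarrow> totdeg_le (f x) n) \<Longrightarrow> totdeg_le (sum f S) n"
  by (induction S rule: infinite_finite_induct) (simp_all add: totdeg_le_add totdeg_le_0)

lemma totdeg_le_prod:
  "finite S \<Longrightarrow> (\<And>x. x \<in> S \<Longrightarrow> totdeg_le (f x) (g x)) \<Longrightarrow> totdeg_le (prod f S) (sum g S)"
proof (induction S rule: finite_induct)
  case empty
  then show ?case by (simp add: totdeg_le_def bcoeff_def coeff_1)
qed (simp add: totdeg_le_mult)

lemma totdeg_le_bmonom: "totdeg_le (bmonom m) (fst m + snd m)"
  by (auto simp: totdeg_le_def bcoeff_bmonom)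

lemma totdeg_le_const: "totdeg_le [:[:c:]:] n"
  by (simp add: totdeg_le_def bcoeff_const)

section \<open>Bezout's bound\<close>

text \<open>The leading exponent of \<open>p\<close> for the graded order in which ties are broken by the
  degree in \<open>y\<close>. It is additive under multiplication, and the monomials it does not divide
  span a complement of the multiples of \<open>p\<close>.\<close>

definition lead_ydeg :: "bpoly \<Rightarrow> nat" where
  "lead_ydeg p = Max {j. j \<le> totdeg p \<and> bcoeff p (totdeg p - j, j) \<noteq> 0}"

definition lead_xdeg :: "bpoly \<Rightarrow> nat" where
  "lead_xdeg p = totdeg p - lead_ydeg p"

lemma
  assumes "p \<noteq> 0"
  shows lead_xdeg_add_lead_ydeg: "lead_xdeg p + lead_ydeg p = totdeg p"
    and bcoeff_lead_nonzero: "bcoeff p (lead_xdeg p, lead_ydeg p) \<noteq> 0"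
    and le_lead_ydeg: "bcoeff p (i, j) \<noteq> 0 \<Longrightarrow> i + j = totdeg p \<Longrightarrow> j \<le> lead_ydeg p"
proof -
  let ?S = "{j. j \<le> totdeg p \<and> bcoeff p (totdeg p - j, j) \<noteq> 0}"
  have fin: "finite ?S" by (rule finite_subset[of _ "{..totdeg p}"]) auto
  obtain i0 j0 where "bcoeff p (i0, j0) \<noteq> 0" "i0 + j0 = totdeg p"
    using totdeg_attained[OF assms] .
  moreover have "totdeg p - j0 = i0" using \<open>i0 + j0 = totdeg p\<close> by simp
  ultimately have "j0 \<in> ?S" by auto
  then have "lead_ydeg p \<in> ?S" unfolding lead_ydeg_def using fin by (intro Max_in) auto
  then show "lead_xdeg p + lead_ydeg p = totdeg p" "bcoeff p (lead_xdeg p, lead_ydeg p) \<noteq> 0"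
    by (auto simp: lead_xdeg_def)
  assume "bcoeff p (i, j) \<noteq> 0" "i + j = totdeg p"
  moreover have "totdeg p - j = i" using \<open>i + j = totdeg p\<close> by simp
  ultimately have "j \<in> ?S" by auto
  then show "j \<le> lead_ydeg p" unfolding lead_ydeg_def using fin by (intro Max_ge)
qed

lemma mult_top_degree_term_eq_lead:
  assumes p: "p \<noteq> 0" and q: "q \<noteq> 0" and ij: "i + j = totdeg p + totdeg q"
    and j: "lead_ydeg p + lead_ydeg q \<le> j" and le: "i1 \<le> i" "j1 \<le> j"
    and nz: "bcoeff p (i1, j1) * bcoeff q (i - i1, j - j1) \<noteq> 0"
  shows "i1 = lead_xdeg p \<and> j1 = lead_ydeg p \<and> j = lead_ydeg p + lead_ydeg q"
proof -
  have a: "bcoeff p (i1, j1) \<noteq> 0" and b: "bcoeff q (i - i1, j - j1) \<noteq> 0" using nz by auto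
  have e1: "i1 + j1 = totdeg p" and e2: "(i - i1) + (j - j1) = totdeg q"
    using le_totdeg[OF a] le_totdeg[OF b] ij le by linarith+
  have "j1 \<le> lead_ydeg p" "j - j1 \<le> lead_ydeg q"
    using le_lead_ydeg[OF p a e1] le_lead_ydeg[OF q b e2] .
  then show ?thesis using j le e1 lead_xdeg_add_lead_ydeg[OF p] by linarith
qed

lemma bcoeff_mult_top_degree:
  assumes p: "p \<noteq> 0" and q: "q \<noteq> 0" and ij: "i + j = totdeg p + totdeg q"
    and j: "lead_ydeg p + lead_ydeg q \<le> j"
  shows "bcoeff (p * q) (i, j) =
    (if j = lead_ydeg p + lead_ydeg q
     then bcoeff p (lead_xdeg p, lead_ydeg p) * bcoeff q (lead_xdeg q, lead_ydeg q) else 0)"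
proof -
  let ?F = "\<lambda>i1 j1. bcoeff p (i1, j1) * bcoeff q (i - i1, j - j1)"
  note lead = mult_top_degree_term_eq_lead[OF p q ij j]
  show ?thesis
  proof (cases "j = lead_ydeg p + lead_ydeg q")
    case True
    then have i: "i = lead_xdeg p + lead_xdeg q"
      using ij lead_xdeg_add_lead_ydeg[OF p] lead_xdeg_add_lead_ydeg[OF q] by linarith
    have "bcoeff (p * q) (i, j) = (\<Sum>j1\<le>j. \<Sum>i1\<le>i.
        if j1 = lead_ydeg p then if i1 = lead_xdeg p then ?F i1 j1 else 0 else 0)"
    proof (unfold bcoeff_mult, intro sum.cong refl)
      fix i1 j1 assume "i1 \<in> {..i}" "j1 \<in> {..j}"
      then show "?F i1 j1 = (if j1 = lead_ydeg p then if i1 = lead_xdeg p then ?F i1 j1 else 0 else 0)"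
        using lead[of i1 j1] by (cases "?F i1 j1 = 0") auto
    qed
    also have "\<dots> = (\<Sum>j1\<le>j. if j1 = lead_ydeg p then
        (\<Sum>i1\<le>i. if i1 = lead_xdeg p then ?F i1 j1 else 0) else 0)"
      by (intro sum.cong) auto
    also have "\<dots> = ?F (lead_xdeg p) (lead_ydeg p)"
      using i True by (simp add: sum.delta')
    finally show ?thesis using i True by simp
  next
    case False
    then have "?F i1 j1 = 0" if "i1 \<le> i" "j1 \<le> j" for i1 j1
      using lead[OF that] by blast
    then show ?thesis unfolding bcoeff_mult using False by (auto intro!: sum.neutral)
  qed
qed

lemma bcoeff_mult_lead:
  assumes "p \<noteq> 0" "q \<noteq> 0"
  shows "bcoeff (p * q) (lead_xdeg p + lead_xdeg q, lead_ydeg p + lead_ydeg q) \<noteq> 0"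
  using assms bcoeff_mult_top_degree[OF assms] lead_xdeg_add_lead_ydeg[OF assms(1)]
    lead_xdeg_add_lead_ydeg[OF assms(2)] bcoeff_lead_nonzero
  by (simp add: algebra_simps)

lemma totdeg_mult:
  assumes "p \<noteq> 0" "q \<noteq> 0"
  shows "totdeg (p * q) = totdeg p + totdeg q"
proof (rule antisym)
  have "totdeg_le (p * q) (totdeg p + totdeg q)"
    by (intro totdeg_le_mult totdeg_le_totdeg)
  then show "totdeg (p * q) \<le> totdeg p + totdeg q"
    using assms by (simp add: totdeg_le_iff)
  show "totdeg p + totdeg q \<le> totdeg (p * q)"
    using le_totdeg[OF bcoeff_mult_lead[OF assms]] lead_xdeg_add_lead_ydeg[OF assms(1)]
      lead_xdeg_add_lead_ydeg[OF assms(2)] by linarith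
qed

lemma
  assumes p: "p \<noteq> 0" and q: "q \<noteq> 0"
  shows lead_ydeg_mult: "lead_ydeg (p * q) = lead_ydeg p + lead_ydeg q"
    and lead_xdeg_mult: "lead_xdeg (p * q) = lead_xdeg p + lead_xdeg q"
proof -
  have pq: "p * q \<noteq> 0" using p q by simp
  have td: "totdeg (p * q) = totdeg p + totdeg q" using totdeg_mult[OF p q] .
  have "lead_ydeg p + lead_ydeg q \<le> lead_ydeg (p * q)"
    using le_lead_ydeg[OF pq bcoeff_mult_lead[OF p q]] td
      lead_xdeg_add_lead_ydeg[OF p] lead_xdeg_add_lead_ydeg[OF q] by simp
  moreover have "\<not> lead_ydeg p + lead_ydeg q < lead_ydeg (p * q)"
    using bcoeff_mult_top_degree[OF p q, of "lead_xdeg (p * q)" "lead_ydeg (p * q)"]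
      bcoeff_lead_nonzero[OF pq] lead_xdeg_add_lead_ydeg[OF pq] td by auto
  ultimately show "lead_ydeg (p * q) = lead_ydeg p + lead_ydeg q" by simp
  then show "lead_xdeg (p * q) = lead_xdeg p + lead_xdeg q"
    using td lead_xdeg_add_lead_ydeg[OF pq] lead_xdeg_add_lead_ydeg[OF p]
      lead_xdeg_add_lead_ydeg[OF q] by linarith
qed

lemma totdeg_dvd_le:
  assumes "p dvd q" "q \<noteq> 0"
  shows "totdeg p \<le> totdeg q"
proof -
  obtain r where "q = p * r" using assms(1) by blast
  with assms(2) show ?thesis using totdeg_mult by fastforce
qed

definition monomials_le :: "nat \<Rightarrow> (nat \<times> nat) set" where
  "monomials_le N = {(i, j). i + j \<le> N}"

lemma finite_monomials_le [simp]: "finite (monomials_le N)"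
  by (rule finite_subset[of _ "{..N} \<times> {..N}"]) (auto simp: monomials_le_def)

lemma card_monomials_le: "2 * card (monomials_le N) = (N + 1) * (N + 2)"
proof (induction N)
  case 0
  have "monomials_le 0 = {(0, 0)}" by (auto simp: monomials_le_def)
  then show ?case by simp
next
  case (Suc N)
  define top where "top = (\<lambda>i. (i, Suc N - i)) ` {..Suc N}"
  have "monomials_le (Suc N) = monomials_le N \<union> top"
    by (auto simp: monomials_le_def top_def image_iff)
  moreover have "monomials_le N \<inter> top = {}" by (auto simp: monomials_le_def top_def)
  moreover have "card top = N + 2"
    unfolding top_def by (subst card_image) (auto simp: inj_on_def)
  ultimately have "card (monomials_le (Suc N)) = card (monomials_le N) + N + 2"
    by (simp add: card_Un_disjoint top_def)
  then show ?case using Suc by (simp add: algebra_simps)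
qed

lemma card_monomials_le_not_multiple:
  assumes "a + b = m"
  shows "card {x \<in> monomials_le (m + k). \<not> (a \<le> fst x \<and> b \<le> snd x)} + card (monomials_le k) =
    card (monomials_le (m + k))"
proof -
  let ?shift = "\<lambda>(i, j). (i + a, j + b)"
  define multiples where "multiples = {x \<in> monomials_le (m + k). a \<le> fst x \<and> b \<le> snd x}"
  define others where "others = {x \<in> monomials_le (m + k). \<not> (a \<le> fst x \<and> b \<le> snd x)}"
  have "multiples = ?shift ` monomials_le k"
  proof (intro equalityI subsetI)
    fix x assume "x \<in> multiples"
    then have "(fst x - a, snd x - b) \<in> monomials_le k" "x = ?shift (fst x - a, snd x - b)"
      using assms by (auto simp: monomials_le_def multiples_def)
    then show "x \<in> ?shift ` monomials_le k" by blast
  qed (use assms in \<open>auto simp: monomials_le_def multiples_def\<close>)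
  moreover have "card (?shift ` monomials_le k) = card (monomials_le k)"
    by (rule card_image) (auto simp: inj_on_def)
  moreover have "monomials_le (m + k) = others \<union> multiples" "others \<inter> multiples = {}"
    by (auto simp: others_def multiples_def)
  then have "card (monomials_le (m + k)) = card others + card multiples"
    by (metis card_Un_disjoint finite_Un finite_monomials_le)
  ultimately show ?thesis by (simp add: others_def)
qed

lemma bpoly_expansion:
  assumes "totdeg_le f N"
  shows "f = (\<Sum>m\<in>monomials_le N. bscale (bcoeff f m) (bmonom m))"
  unfolding bpoly_eq_iff_bcoeff
proof
  fix m :: "nat \<times> nat"
  show "bcoeff f m = bcoeff (\<Sum>m\<in>monomials_le N. bscale (bcoeff f m) (bmonom m)) m"
    unfolding bcoeff_lincomb[OF finite_monomials_le]
    using assms by (cases m) (auto simp: monomials_le_def totdeg_le_def)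
qed

lemma in_span_bmonom:
  assumes "totdeg_le f N"
  shows "f \<in> bpoly.span (bmonom ` monomials_le N)"
  by (subst bpoly_expansion[OF assms])
    (intro bpoly.span_sum bpoly.span_scale bpoly.span_base imageI)

lemma card_le_card_monomials_le_if_independent:
  fixes g :: "'i \<Rightarrow> bpoly"
  assumes I: "finite I"
    and indep: "\<And>c. (\<Sum>i\<in>I. bscale (c i) (g i)) = 0 \<Longrightarrow> \<forall>i\<in>I. c i = 0"
    and deg: "\<And>i. i \<in> I \<Longrightarrow> totdeg_le (g i) N"
  shows "card I \<le> card (monomials_le N)"
proof -
  have inj: "inj_on g I"
  proof (rule inj_onI, rule ccontr)
    fix x y assume xy: "x \<in> I" "y \<in> I" "g x = g y" "x \<noteq> y"
    let ?c = "\<lambda>i. if i = x then 1 else if i = y then -1 else (0::real)"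
    have "(\<Sum>i\<in>I. bscale (?c i) (g i)) = (\<Sum>i\<in>{x, y}. bscale (?c i) (g i))"
      using I xy by (intro sum.mono_neutral_right) auto
    also have "\<dots> = 0" using xy by (simp add: bpoly.scale_minus_left)
    finally show False using indep xy by fastforce
  qed
  have "bpoly.independent (g ` I)"
    unfolding bpoly.independent_explicit_module
  proof (intro allI impI)
    fix t u v assume t: "finite t" "t \<subseteq> g ` I" "(\<Sum>v\<in>t. bscale (u v) v) = 0" "v \<in> t"
    let ?c = "\<lambda>i. if g i \<in> t then u (g i) else 0"
    have "(\<Sum>i\<in>I. bscale (?c i) (g i)) = (\<Sum>i\<in>{i\<in>I. g i \<in> t}. bscale (u (g i)) (g i))"
      using I by (intro sum.mono_neutral_cong_right) auto
    also have "\<dots> = (\<Sum>v\<in>g ` {i\<in>I. g i \<in> t}. bscale (u v) v)"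
      by (rule sum.reindex[symmetric, unfolded comp_def]) (rule inj_on_subset[OF inj], auto)
    also have "g ` {i\<in>I. g i \<in> t} = t" using t(2) by auto
    finally have "\<forall>i\<in>I. ?c i = 0" using t(3) by (intro indep) simp
    moreover obtain i where "i \<in> I" "v = g i" using t(2,4) by blast
    ultimately show "u v = 0" using t(4) by auto
  qed
  moreover have "g ` I \<subseteq> bpoly.span (bmonom ` monomials_le N)"
    using deg in_span_bmonom by auto
  ultimately have "card (g ` I) \<le> card (bmonom ` monomials_le N)"
    using bpoly.independent_span_bound by simp
  also have "\<dots> \<le> card (monomials_le N)" by (rule card_image_le) simp
  finally show ?thesis using card_image[OF inj] by simp
qed

definition separating_line :: "real \<times> real \<Rightarrow> real \<times> real \<Rightarrow> bpoly" where
  "separating_line z w =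
     (if fst w \<noteq> fst z then bmonom (1, 0) + [:[:- fst w:]:] else bmonom (0, 1) + [:[:- snd w:]:])"

lemma bpeval_separating_line:
  "bpeval (separating_line z w) a b = (if fst w \<noteq> fst z then a - fst w else b - snd w)"
  by (simp add: separating_line_def)

lemma totdeg_le_separating_line: "totdeg_le (separating_line z w) 1"
  unfolding separating_line_def
  using totdeg_le_bmonom[of "(1, 0)"] totdeg_le_bmonom[of "(0, 1)"]
  by (auto intro!: totdeg_le_add totdeg_le_const)

definition lagrange_bpoly :: "(real \<times> real) set \<Rightarrow> real \<times> real \<Rightarrow> bpoly" where
  "lagrange_bpoly K z = (\<Prod>w\<in>K - {z}. separating_line z w)"

lemma totdeg_le_lagrange_bpoly:
  assumes "finite K"
  shows "totdeg_le (lagrange_bpoly K z) (card K)"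
proof -
  have "totdeg_le (lagrange_bpoly K z) (\<Sum>w\<in>K - {z}. 1)"
    unfolding lagrange_bpoly_def using assms totdeg_le_separating_line by (intro totdeg_le_prod) auto
  then show ?thesis by (rule totdeg_le_mono) (use assms in \<open>simp add: card_Diff_subset_Int\<close>)
qed

lemma bpeval_lagrange_bpoly:
  assumes "finite K" "w \<in> K"
  shows "bpeval (lagrange_bpoly K z) (fst w) (snd w) = 0 \<longleftrightarrow> w \<noteq> z"
  using assms unfolding lagrange_bpoly_def bpeval_prod
  by (auto simp: bpeval_separating_line prod_zero_iff prod_eq_iff intro!: bexI[of _ w])

text \<open>Evaluation at the points of \<open>K\<close> kills the Lagrange terms; then \<open>p\<close> divides \<open>B\<close>, which
  forces \<open>B = 0\<close> since no monomial of \<open>B\<close> is divisible by the leading monomial of \<open>p\<close>.\<close>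

lemma bezout_relation_trivial:
  assumes p: "prime_elem p" and nd: "\<not> p dvd Q" and K: "finite K"
    and zeros: "\<And>z. z \<in> K \<Longrightarrow> bpeval p (fst z) (snd z) = 0 \<and> bpeval Q (fst z) (snd z) = 0"
    and rem: "\<And>i j. bcoeff B (i, j) \<noteq> 0 \<Longrightarrow> \<not> (lead_xdeg p \<le> i \<and> lead_ydeg p \<le> j)"
    and rel: "A * p + B * Q + (\<Sum>z\<in>K. bscale (c z) (lagrange_bpoly K z)) = 0"
  shows "A = 0" "B = 0" "\<And>z. z \<in> K \<Longrightarrow> c z = 0"
proof -
  have p0: "p \<noteq> 0" using p by auto
  show c: "c z = 0" if z: "z \<in> K" for z
  proof -
    have "(\<Sum>w\<in>K. c w * bpeval (lagrange_bpoly K w) (fst z) (snd z)) = 0"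
      using arg_cong[OF rel, of "\<lambda>r. bpeval r (fst z) (snd z)"] zeros[OF z]
      by (simp add: bpeval_sum)
    moreover have "(\<Sum>w\<in>K. c w * bpeval (lagrange_bpoly K w) (fst z) (snd z)) =
        c z * bpeval (lagrange_bpoly K z) (fst z) (snd z)"
    proof -
      have "\<forall>w\<in>K - {z}. c w * bpeval (lagrange_bpoly K w) (fst z) (snd z) = 0"
        using bpeval_lagrange_bpoly[OF K z] by auto
      then show ?thesis by (simp add: sum.remove[OF K z] sum.neutral)
    qed
    ultimately show ?thesis using bpeval_lagrange_bpoly[OF K z, of z] by simp
  qed
  then have "B * Q = p * - A" using rel by (simp add: algebra_simps add_eq_0_iff2)
  then have "p dvd B" using p nd prime_elem_dvd_mult_iff by (metis dvd_triv_left)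
  then obtain C where C: "B = p * C" by blast
  show B: "B = 0"
  proof (rule ccontr)
    assume "B \<noteq> 0"
    then have "C \<noteq> 0" using C by auto
    then show False
      using rem[of "lead_xdeg B" "lead_ydeg B"] bcoeff_lead_nonzero[OF \<open>B \<noteq> 0\<close>]
        lead_xdeg_mult[OF p0] lead_ydeg_mult[OF p0] C by auto
  qed
  show "A = 0" using rel p0 by (simp add: B c)
qed

definition bezout_family ::
    "bpoly \<Rightarrow> bpoly \<Rightarrow> (real \<times> real) set \<Rightarrow> (nat \<times> nat) + (nat \<times> nat) + real \<times> real \<Rightarrow> bpoly"
  where
  "bezout_family p Q K = case_sum (\<lambda>x. bmonom x * p) (case_sum (\<lambda>x. bmonom x * Q) (lagrange_bpoly K))"

lemma bezout_family_independent:
  assumes p: "prime_elem p" and nd: "\<not> p dvd Q"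
    and K: "finite K" "K \<subseteq> zero_set p \<inter> zero_set Q"
    and M: "finite M" and R: "finite R"
    and rem: "\<And>x. x \<in> R \<Longrightarrow> \<not> (lead_xdeg p \<le> fst x \<and> lead_ydeg p \<le> snd x)"
    and rel: "(\<Sum>i\<in>M <+> (R <+> K). bscale (c i) (bezout_family p Q K i)) = 0"
  shows "\<forall>i\<in>M <+> (R <+> K). c i = 0"
proof -
  define A where "A = (\<Sum>x\<in>M. bscale (c (Inl x)) (bmonom x))"
  define B where "B = (\<Sum>x\<in>R. bscale (c (Inr (Inl x))) (bmonom x))"
  have bcoeff_A: "bcoeff A x = (if x \<in> M then c (Inl x) else 0)" for x
    unfolding A_def using M by (rule bcoeff_lincomb)
  have bcoeff_B: "bcoeff B x = (if x \<in> R then c (Inr (Inl x)) else 0)" for x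
    unfolding B_def using R by (rule bcoeff_lincomb)
  have "(\<Sum>i\<in>M <+> (R <+> K). bscale (c i) (bezout_family p Q K i)) =
    A * p + B * Q + (\<Sum>z\<in>K. bscale (c (Inr (Inr z))) (lagrange_bpoly K z))"
    unfolding A_def B_def bezout_family_def using M R K
    by (simp add: sum.Plus sum_distrib_right bscale_def mult_smult_left add.assoc)
  with rel have rel': "A * p + B * Q + (\<Sum>z\<in>K. bscale (c (Inr (Inr z))) (lagrange_bpoly K z)) = 0"
    by simp
  have zeros: "bpeval p (fst z) (snd z) = 0 \<and> bpeval Q (fst z) (snd z) = 0" if "z \<in> K" for z
    using K(2) that by (auto simp: zero_set_def)
  have rem': "\<not> (lead_xdeg p \<le> i \<and> lead_ydeg p \<le> j)" if "bcoeff B (i, j) \<noteq> 0" for i j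
    using that rem[of "(i, j)"] by (simp add: bcoeff_B split: if_splits)
  note trivial = bezout_relation_trivial[OF p nd K(1) zeros rem' rel']
  have "c (Inl x) = 0" if "x \<in> M" for x
    using bcoeff_A[of x] that trivial(1) by simp
  moreover have "c (Inr (Inl x)) = 0" if "x \<in> R" for x
    using bcoeff_B[of x] that trivial(2) by simp
  ultimately show ?thesis using trivial(3) by blast
qed

text \<open>Dimension count: for \<open>N = m + n + k\<close>, the products of \<open>p\<close> with monomials, of \<open>Q\<close> with the
  monomials not divisible by the leading monomial of \<open>p\<close>, and the \<open>k\<close> Lagrange polynomials
  are independent in degree \<open>\<le> N\<close>; comparing dimensions leaves exactly \<open>k \<le> m n\<close>.\<close>

lemma card_common_zeros_le:
  assumes p: "irreducible p" and nd: "\<not> p dvd Q"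
    and K: "finite K" "K \<subseteq> zero_set p \<inter> zero_set Q"
  shows "card K \<le> totdeg p * totdeg Q"
proof -
  have p0: "p \<noteq> 0" and pr: "prime_elem p"
    using p irreducible_imp_prime_elem by auto
  define m n k where "m = totdeg p" and "n = totdeg Q" and "k = card K"
  define R where "R = {x \<in> monomials_le (m + k). \<not> (lead_xdeg p \<le> fst x \<and> lead_ydeg p \<le> snd x)}"
  define I where "I = monomials_le (n + k) <+> (R <+> K)"
  have R: "finite R" unfolding R_def by simp
  have "card I \<le> card (monomials_le (m + n + k))"
  proof (rule card_le_card_monomials_le_if_independent)
    show "finite I" unfolding I_def using R K by simp
    have "\<not> (lead_xdeg p \<le> fst x \<and> lead_ydeg p \<le> snd x)" if "x \<in> R" for x
      using that by (simp add: R_def)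
    then show "\<forall>i\<in>I. c i = 0" if "(\<Sum>i\<in>I. bscale (c i) (bezout_family p Q K i)) = 0" for c
      using bezout_family_independent[OF pr nd K finite_monomials_le R] that
      unfolding I_def by blast
  next
    fix i assume "i \<in> I"
    moreover have "totdeg_le (bmonom x * p) (m + n + k)" if "x \<in> monomials_le (n + k)" for x
      using that totdeg_le_mult[OF totdeg_le_bmonom totdeg_le_totdeg, of x p]
      by (elim totdeg_le_mono) (auto simp: monomials_le_def m_def)
    moreover have "totdeg_le (bmonom x * Q) (m + n + k)" if "x \<in> R" for x
      using that totdeg_le_mult[OF totdeg_le_bmonom totdeg_le_totdeg, of x Q]
      by (elim totdeg_le_mono) (auto simp: monomials_le_def R_def n_def)
    moreover have "totdeg_le (lagrange_bpoly K z) (m + n + k)" for z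
      using totdeg_le_lagrange_bpoly[OF K(1)] by (rule totdeg_le_mono) (simp add: k_def)
    ultimately show "totdeg_le (bezout_family p Q K i) (m + n + k)"
      unfolding I_def bezout_family_def by auto
  qed
  moreover have "card I = card (monomials_le (n + k)) + card R + k"
    unfolding I_def k_def using R K by (simp add: card_Plus)
  moreover have "card R + card (monomials_le k) = card (monomials_le (m + k))"
    unfolding R_def by (rule card_monomials_le_not_multiple) (simp add: m_def lead_xdeg_add_lead_ydeg p0)
  moreover have "(m + n + k + 1) * (m + n + k + 2) + (k + 1) * (k + 2) =
      (n + k + 1) * (n + k + 2) + (m + k + 1) * (m + k + 2) + 2 * (m * n)"
    by (simp add: algebra_simps)
  ultimately have "k \<le> m * n"
    using card_monomials_le[of "m + n + k"] card_monomials_le[of "n + k"]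
      card_monomials_le[of "m + k"] card_monomials_le[of k]
    by linarith
  then show ?thesis by (simp add: k_def m_def n_def)
qed

theorem bezout:
  assumes "irreducible p" "\<not> p dvd Q"
  shows "finite (zero_set p \<inter> zero_set Q)"
    and "card (zero_set p \<inter> zero_set Q) \<le> totdeg p * totdeg Q"
proof -
  have bound: "card K \<le> totdeg p * totdeg Q" if "finite K" "K \<subseteq> zero_set p \<inter> zero_set Q" for K
    using card_common_zeros_le[OF assms that] .
  show fin: "finite (zero_set p \<inter> zero_set Q)"
  proof (rule ccontr)
    assume "infinite (zero_set p \<inter> zero_set Q)"
    then obtain K where "finite K" "card K = Suc (totdeg p * totdeg Q)"
      "K \<subseteq> zero_set p \<inter> zero_set Q"
      using infinite_arbitrarily_large by blast
    then show False using bound by fastforce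
  qed
  show "card (zero_set p \<inter> zero_set Q) \<le> totdeg p * totdeg Q"
    using bound[OF fin] by simp
qed

section \<open>Polynomials with finitely many zeros\<close>

text \<open>If \<open>F(-, b)\<close> crosses zero transversally at \<open>a\<close>, then \<open>F(a \<pm> h, -)\<close> keep opposite signs on
  a neighbourhood of \<open>b\<close>, and the intermediate value theorem yields a zero on each nearby
  horizontal line.\<close>

lemma infinite_zeros_if_partial_deriv_pos:
  fixes F :: "real \<Rightarrow> real \<Rightarrow> real"
  assumes cont_t: "\<And>s. continuous_on UNIV (\<lambda>t. F t s)"
    and cont_s: "\<And>t. isCont (F t) b"
    and zero: "F a b = 0"
    and deriv: "DERIV (\<lambda>t. F t b) a :> D" "0 < D"
  shows "infinite {(t, s). F t s = 0}"
proof
  assume fin: "finite {(t, s). F t s = 0}"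
  obtain d1 where d1: "d1 > 0" "\<forall>h>0. h < d1 \<longrightarrow> F a b < F (a + h) b"
    using DERIV_pos_inc_right[OF deriv] by blast
  obtain d2 where d2: "d2 > 0" "\<forall>h>0. h < d2 \<longrightarrow> F (a - h) b < F a b"
    using DERIV_pos_inc_left[OF deriv] by blast
  define h where "h = min d1 d2 / 2"
  have h: "0 < h" "h < d1" "h < d2" using d1 d2 by (auto simp: h_def)
  have "F (a + h) b > 0" using d1 h zero by auto
  then have "eventually (\<lambda>s. F (a + h) s > 0) (at b)"
    using order_tendstoD(1) cont_s[unfolded isCont_def] by blast
  moreover have "F (a - h) b < 0" using d2 h zero by auto
  then have "eventually (\<lambda>s. F (a - h) s < 0) (at b)"
    using order_tendstoD(2) cont_s[unfolded isCont_def] by blast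
  ultimately have "eventually (\<lambda>s. F (a + h) s > 0 \<and> F (a - h) s < 0) (at b)"
    by eventually_elim auto
  then obtain e where e: "e > 0"
    "\<forall>s. s \<noteq> b \<and> dist s b < e \<longrightarrow> F (a + h) s > 0 \<and> F (a - h) s < 0"
    unfolding eventually_at by auto
  have "{b<..<b + e} \<subseteq> snd ` {(t, s). F t s = 0}"
  proof
    fix s assume "s \<in> {b<..<b + e}"
    then have signs: "F (a + h) s > 0" "F (a - h) s < 0" using e by (auto simp: dist_real_def)
    have "continuous_on {a - h..a + h} (\<lambda>t. F t s)"
      using cont_t[of s] by (rule continuous_on_subset) auto
    then obtain t where "F t s = 0"
      using IVT'[of "\<lambda>t. F t s" "a - h" 0 "a + h"] signs h(1) by force
    then show "s \<in> snd ` {(t, s). F t s = 0}" by (auto intro!: image_eqI[of _ _ "(t, s)"])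
  qed
  then have "finite {b<..<b + e}"
    using fin by (meson finite_imageI finite_subset)
  then show False using infinite_Ioo[of b "b + e"] e by simp
qed

lemma infinite_zeros_if_partial_deriv_nonzero:
  fixes F :: "real \<Rightarrow> real \<Rightarrow> real"
  assumes "\<And>s. continuous_on UNIV (\<lambda>t. F t s)"
    and "\<And>t. isCont (F t) b"
    and "F a b = 0"
    and "DERIV (\<lambda>t. F t b) a :> D" "D \<noteq> 0"
  shows "infinite {(t, s). F t s = 0}"
proof (cases "D > 0")
  case True
  then show ?thesis using infinite_zeros_if_partial_deriv_pos assms by blast
next
  case False
  have "infinite {(t, s). - F t s = 0}"
  proof (rule infinite_zeros_if_partial_deriv_pos)
    show "DERIV (\<lambda>t. - F t b) a :> - D" using assms(4) by (intro derivative_intros)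
  qed (use assms False in \<open>auto intro!: continuous_intros\<close>)
  then show ?thesis by simp
qed

definition pderiv_x :: "bpoly \<Rightarrow> bpoly" where
  "pderiv_x r = map_poly pderiv r"

lemma DERIV_bpeval: "DERIV (\<lambda>t. bpeval r t b) a :> bpeval (pderiv_x r) a b"
proof -
  have "pderiv (poly r [:b:]) = poly (pderiv_x r) [:b:]"
    unfolding pderiv_x_def
    by (induction r) (auto simp: map_poly_pCons pderiv_add pderiv_mult pderiv_pCons pderiv_smult)
  then show ?thesis using poly_DERIV[of "poly r [:b:]" a] by (simp add: bpeval_conv_poly)
qed

lemma bpeval_pderiv_x_eq_0:
  assumes "finite (zero_set r)" "bpeval r a b = 0"
  shows "bpeval (pderiv_x r) a b = 0"
proof (rule ccontr)
  assume nonzero: "bpeval (pderiv_x r) a b \<noteq> 0"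
  have "infinite {(t, s). bpeval r t s = 0}"
  proof (rule infinite_zeros_if_partial_deriv_nonzero[where F = "bpeval r" and a = a and b = b])
    show "DERIV (\<lambda>t. bpeval r t b) a :> bpeval (pderiv_x r) a b" by (rule DERIV_bpeval)
    show "continuous_on UNIV (\<lambda>t. bpeval r t s)" for s
      unfolding bpeval_conv_poly by (intro continuous_intros)
    show "isCont (bpeval r t) b" for t
      unfolding bpeval_def by simp
  qed (use assms(2) nonzero in simp_all)
  then show False using assms(1) by (simp add: zero_set_def)
qed

lemma zero_set_empty_if_pderiv_x_eq_0:
  assumes fin: "finite (zero_set r)" and d: "pderiv_x r = 0"
  shows "zero_set r = {}"
proof (rule ccontr)
  assume "zero_set r \<noteq> {}"
  then obtain a b where ab: "bpeval r a b = 0" by (auto simp: zero_set_def)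
  have "poly (coeff r j) t = poly (coeff r j) a" for j t
  proof -
    have "pderiv (coeff r j) = coeff (pderiv_x r) j" by (simp add: pderiv_x_def coeff_map_poly)
    then have "degree (coeff r j) = 0" using d by (simp add: pderiv_eq_0_iff)
    then obtain c where "coeff r j = [:c:]" by (rule degree_eq_zeroE)
    then show ?thesis by simp
  qed
  then have "map_poly (\<lambda>c. poly c t) r = map_poly (\<lambda>c. poly c a) r" for t
    by (intro poly_eqI) (simp add: coeff_map_poly)
  then have "bpeval r t b = bpeval r a b" for t
    unfolding bpeval_def by metis
  then have "range (\<lambda>t. (t, b)) \<subseteq> zero_set r" using ab by (auto simp: zero_set_def)
  moreover have "infinite (range (\<lambda>t::real. (t, b)))"
  proof
    assume "finite (range (\<lambda>t::real. (t, b)))"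
    then have "finite (UNIV :: real set)" by (rule finite_imageD) (simp add: inj_on_def)
    then show False using infinite_UNIV_char_0 by blast
  qed
  ultimately show False using fin finite_subset by blast
qed

lemma totdeg_le_pderiv_x: "totdeg_le (pderiv_x r) (totdeg r - 1)"
  unfolding totdeg_le_def
proof (intro allI impI)
  fix i j assume "bcoeff (pderiv_x r) (i, j) \<noteq> 0"
  then have "bcoeff r (Suc i, j) \<noteq> 0"
    by (simp add: pderiv_x_def bcoeff_def coeff_map_poly coeff_pderiv)
  then show "i + j \<le> totdeg r - 1" using le_totdeg by fastforce
qed

lemma one_le_totdeg_if_not_unit:
  assumes "p \<noteq> 0" "\<not> is_unit p"
  shows "1 \<le> totdeg p"
proof (rule ccontr)
  assume "\<not> 1 \<le> totdeg p"
  then have "totdeg_le p 0" using totdeg_le_iff[OF assms(1), of 0] by simp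
  define c where "c = bcoeff p (0, 0)"
  have "bcoeff p m = bcoeff [:[:c:]:] m" for m
    using \<open>totdeg_le p 0\<close> by (cases m) (auto simp: totdeg_le_def bcoeff_const c_def)
  then have p: "p = [:[:c:]:]" by (simp add: bpoly_eq_iff_bcoeff)
  then have "p * [:[:1 / c:]:] = 1" using assms(1) by (simp flip: one_pCons)
  then show False using assms(2) by (metis dvdI)
qed

lemma zero_set_unit:
  assumes "is_unit p"
  shows "zero_set p = {}"
proof -
  obtain q where "1 = p * q" using assms by blast
  then have "bpeval p a b * bpeval q a b = 1" for a b by (metis bpeval_1 bpeval_mult)
  then have "bpeval p a b \<noteq> 0" for a b by (metis mult_zero_left zero_neq_one)
  then show ?thesis by (auto simp: zero_set_def)
qed

lemma card_zero_set_irreducible_le: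
  assumes irr: "irreducible q" and fin: "finite (zero_set q)"
  shows "card (zero_set q) \<le> totdeg q ^ 2"
proof (cases "pderiv_x q = 0")
  case True
  then show ?thesis using zero_set_empty_if_pderiv_x_eq_0[OF fin] by simp
next
  case False
  have deg: "totdeg (pderiv_x q) \<le> totdeg q - 1"
    using totdeg_le_pderiv_x[of q] totdeg_le_iff[OF False] by simp
  have "1 \<le> totdeg q" using irr by (intro one_le_totdeg_if_not_unit) (auto simp: irreducible_def)
  then have "\<not> q dvd pderiv_x q" using totdeg_dvd_le[OF _ False] deg by fastforce
  note bezout = bezout[OF irr this]
  have "zero_set q \<subseteq> zero_set q \<inter> zero_set (pderiv_x q)"
    using bpeval_pderiv_x_eq_0[OF fin] by (auto simp: zero_set_def)
  then have "card (zero_set q) \<le> card (zero_set q \<inter> zero_set (pderiv_x q))"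
    using bezout(1) by (rule card_mono[rotated])
  also have "\<dots> \<le> totdeg q * totdeg (pderiv_x q)" by (rule bezout(2))
  also have "\<dots> \<le> totdeg q ^ 2"
    unfolding power2_eq_square using deg by (intro mult_le_mono2) linarith
  finally show ?thesis .
qed

lemma card_zero_set_le:
  assumes "q \<noteq> 0" "finite (zero_set q)"
  shows "card (zero_set q) \<le> totdeg q ^ 2"
  using assms
proof (induction "totdeg q" arbitrary: q rule: less_induct)
  case less
  consider "is_unit q" | "irreducible q"
    | a b where "q = a * b" "\<not> is_unit a" "\<not> is_unit b"
    using less.prems(1) unfolding irreducible_def by blast
  then show ?case
  proof cases
    case 1
    then show ?thesis using zero_set_unit by simp
  next
    case 2
    then show ?thesis using card_zero_set_irreducible_le less.prems(2) by blast
  next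
    case (3 a b)
    have "a \<noteq> 0" "b \<noteq> 0" using 3 less.prems(1) by auto
    then have "1 \<le> totdeg a" "1 \<le> totdeg b" and deg: "totdeg q = totdeg a + totdeg b"
      using one_le_totdeg_if_not_unit 3 totdeg_mult by auto
    have fin: "finite (zero_set a)" "finite (zero_set b)"
      using less.prems(2) by (simp_all add: 3 zero_set_mult)
    have "card (zero_set q) \<le> card (zero_set a) + card (zero_set b)"
      unfolding 3 zero_set_mult by (rule card_Un_le)
    also have "\<dots> \<le> totdeg a ^ 2 + totdeg b ^ 2"
      using less.hyps[of a] less.hyps[of b] fin deg \<open>a \<noteq> 0\<close> \<open>b \<noteq> 0\<close>
        \<open>1 \<le> totdeg a\<close> \<open>1 \<le> totdeg b\<close> by (intro add_mono) auto
    also have "\<dots> \<le> totdeg q ^ 2" by (simp add: deg power2_sum)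
    finally show ?thesis .
  qed
qed

section \<open>Affine hulls of Veronese images\<close>

definition vscale :: "real \<Rightarrow> vect \<Rightarrow> vect" where
  "vscale c v = (\<lambda>i. c * v i)"

interpretation vect: vector_space vscale
  by unfold_locales (auto simp: vscale_def fun_eq_iff algebra_simps)

interpretation vect_real: vector_space_pair vscale "(*) :: real \<Rightarrow> real \<Rightarrow> real"
  by unfold_locales

lemma sum_vect_apply: "(\<Sum>x\<in>T. f x) i = (\<Sum>x\<in>T. (f x :: vect) i)"
  by (induction T rule: infinite_finite_induct) auto

definition affine_lift :: "vect \<Rightarrow> vect" where
  "affine_lift v = v((0, 0) := 1)"

lemma affine_lift_in_span_if_in_Fl:
  assumes "x \<in> Fl P"
  shows "affine_lift x \<in> vect.span (affine_lift ` P)"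
proof -
  obtain T u where T: "finite T" "T \<subseteq> P" "sum u T = 1" "x = (\<lambda>i. \<Sum>v\<in>T. u v * v i)"
    using assms unfolding Fl_def by blast
  have "affine_lift x = (\<Sum>v\<in>T. vscale (u v) (affine_lift v))"
    unfolding fun_eq_iff sum_vect_apply using T(3,4) by (auto simp: affine_lift_def vscale_def)
  also have "\<dots> \<in> vect.span (affine_lift ` P)"
    using T(2) by (intro vect.span_sum vect.span_scale vect.span_base) auto
  finally show ?thesis .
qed

lemma in_Fl_if_affine_lift_in_span:
  assumes P0: "\<And>v. v \<in> P \<Longrightarrow> v (0, 0) = 0" and z0: "z (0, 0) = 0"
    and span: "affine_lift z \<in> vect.span (affine_lift ` P)"
  shows "z \<in> Fl P"
proof -
  obtain t r where t: "finite t" "t \<subseteq> affine_lift ` P" "affine_lift z = (\<Sum>a\<in>t. vscale (r a) a)"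
    using span unfolding vect.span_explicit by blast
  define unlift where "unlift a = a((0, 0) := 0)" for a :: vect
  have lift_unlift: "affine_lift (unlift a) = a" if "a \<in> t" for a
    using t(2) that by (auto simp: unlift_def affine_lift_def fun_eq_iff)
  have unlift_lift: "unlift (affine_lift v) = v" if "v \<in> P" for v
    using P0[OF that] by (auto simp: unlift_def affine_lift_def fun_eq_iff)
  have inj: "inj_on unlift t" by (rule inj_on_inverseI[where g = affine_lift]) (rule lift_unlift)
  define T where "T = unlift ` t"
  define u where "u w = r (affine_lift w)" for w
  have T: "finite T" "T \<subseteq> P" unfolding T_def using t(1,2) unlift_lift by auto
  have reindex: "(\<Sum>w\<in>T. f w) = (\<Sum>a\<in>t. f (unlift a))" for f :: "vect \<Rightarrow> real"
    unfolding T_def using sum.reindex[OF inj] by simp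
  have coord: "z i = (\<Sum>w\<in>T. u w * w i)" if "i \<noteq> (0, 0)" for i
  proof -
    have "z i = (\<Sum>a\<in>t. r a * a i)"
      using fun_cong[OF t(3), of i] that by (simp add: sum_vect_apply vscale_def affine_lift_def)
    also have "\<dots> = (\<Sum>w\<in>T. u w * w i)"
      unfolding reindex using that lift_unlift by (intro sum.cong refl) (auto simp: u_def unlift_def)
    finally show ?thesis .
  qed
  have "sum u T = (\<Sum>a\<in>t. r a * a (0, 0))"
    unfolding reindex using t(2) lift_unlift
    by (intro sum.cong refl) (auto simp: u_def affine_lift_def)
  also have "\<dots> = 1"
    using fun_cong[OF t(3), of "(0, 0)"] by (simp add: sum_vect_apply vscale_def affine_lift_def)
  finally have "sum u T = 1" .
  moreover have "z = (\<lambda>i. \<Sum>w\<in>T. u w * w i)"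
  proof
    fix i show "z i = (\<Sum>w\<in>T. u w * w i)"
      using coord[of i] z0 P0 T(2) by (cases "i = (0, 0)") (auto intro!: sum.neutral)
  qed
  ultimately show ?thesis unfolding Fl_def using T by blast
qed

lemma vect_separating_functional:
  assumes "z \<notin> vect.span V"
  shows "\<exists>g. Vector_Spaces.linear vscale (*) g \<and> g z = (1 :: real) \<and> (\<forall>x\<in>vect.span V. g x = 0)"
proof -
  obtain B where B: "B \<subseteq> V" "vect.independent B" "V \<subseteq> vect.span B"
    by (rule vect.maximal_independent_subset)
  have span_V: "vect.span V = vect.span B"
    using B(1,3) vect.span_mono vect.span_minimal[OF B(3) vect.subspace_span] by blast
  then have zB: "z \<notin> vect.span B" using assms by simp
  obtain g where g: "Vector_Spaces.linear vscale (*) g"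
    "\<And>x. x \<in> insert z B \<Longrightarrow> g x = (if x = z then 1 else 0)"
    using vect_real.linear_independent_extend[OF vect.independent_insertI[OF zB B(2)],
        of "\<lambda>x. if x = z then 1 else 0"] by blast
  have "g b = 0" if "b \<in> B" for b
    using g(2)[of b] that zB vect.span_base by fastforce
  then have "g x = 0" if "x \<in> vect.span V" for x
    using vect_real.linear_eq_0_on_span[OF g(1)] that span_V by blast
  with g show ?thesis by auto
qed

definition unit_vect :: "nat \<times> nat \<Rightarrow> vect" where
  "unit_vect m = (\<lambda>m'. if m' = m then 1 else 0)"

lemma affine_lift_psi:
  "affine_lift (psi k (a, b)) = (\<Sum>m\<in>monomials_le k. vscale (a ^ fst m * b ^ snd m) (unit_vect m))"
proof
  fix m'
  have "(\<Sum>m\<in>monomials_le k. vscale (a ^ fst m * b ^ snd m) (unit_vect m)) m' =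
      (\<Sum>m\<in>monomials_le k. if m = m' then a ^ fst m' * b ^ snd m' else 0)"
    unfolding sum_vect_apply by (intro sum.cong) (auto simp: vscale_def unit_vect_def)
  also have "\<dots> = (if m' \<in> monomials_le k then a ^ fst m' * b ^ snd m' else 0)"
    by (rule sum.delta[OF finite_monomials_le])
  also have "\<dots> = affine_lift (psi k (a, b)) m'"
    by (cases m') (auto simp: affine_lift_def psi_def monomials_le_def)
  finally show "affine_lift (psi k (a, b)) m' =
    (\<Sum>m\<in>monomials_le k. vscale (a ^ fst m * b ^ snd m) (unit_vect m)) m'" ..
qed

text \<open>The values on the unit vectors of a linear functional separating the lift of \<open>psi k c\<close>
  from the span of the lifts of \<open>psi k ` S\<close> are the coefficients of the polynomial sought.\<close>

lemma bpoly_separating_from_Fl: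
  assumes "psi k c \<notin> Fl (psi k ` S)"
  obtains Q where "totdeg_le Q k" "bpeval Q (fst c) (snd c) \<noteq> 0"
    "psi k -` Fl (psi k ` S) \<subseteq> zero_set Q"
proof -
  have "affine_lift (psi k c) \<notin> vect.span (affine_lift ` psi k ` S)"
  proof
    assume "affine_lift (psi k c) \<in> vect.span (affine_lift ` psi k ` S)"
    then have "psi k c \<in> Fl (psi k ` S)"
      by (rule in_Fl_if_affine_lift_in_span[rotated 2]) (auto simp: psi_def)
    with assms show False ..
  qed
  then obtain g :: "vect \<Rightarrow> real"
    where g: "Vector_Spaces.linear vscale (*) g" "g (affine_lift (psi k c)) = 1"
      "\<forall>x\<in>vect.span (affine_lift ` psi k ` S). g x = 0"
    using vect_separating_functional by blast
  define Q where "Q = (\<Sum>m\<in>monomials_le k. bscale (g (unit_vect m)) (bmonom m))"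
  have Q_eval: "bpeval Q a b = g (affine_lift (psi k (a, b)))" for a b
    unfolding affine_lift_psi Q_def bpeval_sum vect_real.linear_sum[OF g(1)]
      vect_real.linear_scale[OF g(1)]
    by (intro sum.cong) auto
  show ?thesis
  proof
    show "totdeg_le Q k"
      unfolding Q_def
      by (intro totdeg_le_sum totdeg_le_bscale totdeg_le_mono[OF totdeg_le_bmonom])
        (auto simp: monomials_le_def)
    show "bpeval Q (fst c) (snd c) \<noteq> 0"
      using Q_eval[of "fst c" "snd c"] g(2) by simp
    show "psi k -` Fl (psi k ` S) \<subseteq> zero_set Q"
      using affine_lift_in_span_if_in_Fl g(3) by (fastforce simp: zero_set_def Q_eval)
  qed
qed

section \<open>Points of \<open>C\<^sub>0\<close> on \<open>U\<^sub>e(B, D)\<close>\<close>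

lemma card_curve_inter_psi_preimage_le:
  assumes p: "irreducible p" and c: "c \<in> zero_set p" and deg: "totdeg p \<le> d"
    and sep: "psi k c \<notin> Fl (psi k ` S)"
  shows "finite (zero_set p \<inter> psi k -` Fl (psi k ` S))"
    and "card (zero_set p \<inter> psi k -` Fl (psi k ` S)) \<le> d * k"
proof -
  obtain Q where Q: "totdeg_le Q k" "bpeval Q (fst c) (snd c) \<noteq> 0"
    "psi k -` Fl (psi k ` S) \<subseteq> zero_set Q"
    using bpoly_separating_from_Fl[OF sep] .
  have "\<not> p dvd Q"
    using Q(2) c by (auto simp: zero_set_def elim!: dvdE)
  note bezout = bezout[OF p this]
  have sub: "zero_set p \<inter> psi k -` Fl (psi k ` S) \<subseteq> zero_set p \<inter> zero_set Q"
    using Q(3) by blast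
  then show "finite (zero_set p \<inter> psi k -` Fl (psi k ` S))"
    using bezout(1) by (rule finite_subset)
  have "card (zero_set p \<inter> psi k -` Fl (psi k ` S)) \<le> card (zero_set p \<inter> zero_set Q)"
    using sub bezout(1) by (rule card_mono[rotated])
  also have "\<dots> \<le> totdeg p * totdeg Q" by (rule bezout(2))
  also have "\<dots> \<le> d * k"
    using deg Q(1,2) totdeg_le_iff[of Q k] by (intro mult_le_mono) force+
  finally show "card (zero_set p \<inter> psi k -` Fl (psi k ` S)) \<le> d * k" .
qed

lemma card_curve_inter_Union_psi_preimage_le:
  assumes p: "irreducible p" and c: "c \<in> zero_set p" and deg: "totdeg p \<le> d"
    and sep: "\<And>k S. (k, S) \<in> set ks \<Longrightarrow> psi k c \<notin> Fl (psi k ` S)"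
  shows "finite (zero_set p \<inter> (\<Union>(k, S)\<in>set ks. psi k -` Fl (psi k ` S))) \<and>
    card (zero_set p \<inter> (\<Union>(k, S)\<in>set ks. psi k -` Fl (psi k ` S))) \<le> d * sum_list (map fst ks)"
  using sep
proof (induction ks)
  case Nil
  then show ?case by simp
next
  case (Cons kS ks)
  obtain k S where kS: "kS = (k, S)" by fastforce
  let ?X = "zero_set p \<inter> psi k -` Fl (psi k ` S)"
  let ?Y = "zero_set p \<inter> (\<Union>(k, S)\<in>set ks. psi k -` Fl (psi k ` S))"
  have X: "finite ?X" "card ?X \<le> d * k"
    using card_curve_inter_psi_preimage_le[OF p c deg] Cons.prems kS by auto
  have Y: "finite ?Y" "card ?Y \<le> d * sum_list (map fst ks)"
    using Cons by auto
  have "zero_set p \<inter> (\<Union>(k, S)\<in>set (kS # ks). psi k -` Fl (psi k ` S)) = ?X \<union> ?Y"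
    by (auto simp: kS)
  moreover have "card (?X \<union> ?Y) \<le> d * sum_list (map fst (kS # ks))"
    using card_Un_le[of ?X ?Y] X Y by (simp add: kS algebra_simps)
  ultimately show ?case using X Y by simp
qed

text \<open>A pair \<open>(k, S)\<close> stands for the piece \<open>psi k -` Fl (psi k ` S)\<close> of \<open>U\<^sub>e(B, D)\<close>.\<close>

definition Uset_pieces ::
    "nat \<Rightarrow> nat \<Rightarrow> (real \<times> real) set \<Rightarrow> (real \<times> real) set \<Rightarrow> (nat \<times> (real \<times> real) set) list"
  where
  "Uset_pieces d e B D =
     (d, B) # (if alpha e D < 0 then [] else
       (e, D) # (if beta d e B D < 0 then [] else [(d - e, B - psi e -` Vset e D)]))"

lemma Uset_eq_Union_pieces:
  "Uset d e B D = (\<Union>(k, S)\<in>set (Uset_pieces d e B D). psi k -` Fl (psi k ` S))"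
  by (auto simp: Uset_def Uset_pieces_def Vset_def Wset_def)

lemma sum_list_Uset_pieces_le: "e \<le> d \<Longrightarrow> sum_list (map fst (Uset_pieces d e B D)) \<le> 2 * d"
  by (simp add: Uset_pieces_def)

lemma card_curve_inter_Uset_le:
  assumes p: "irreducible p" and c: "c \<in> zero_set p" "c \<notin> Uset d e B D"
    and deg: "totdeg p \<le> d" and e: "e \<le> d"
  shows "finite (zero_set p \<inter> Uset d e B D) \<and> card (zero_set p \<inter> Uset d e B D) \<le> 2 * d ^ 2"
proof -
  have "finite (zero_set p \<inter> Uset d e B D) \<and>
      card (zero_set p \<inter> Uset d e B D) \<le> d * sum_list (map fst (Uset_pieces d e B D))"
    using card_curve_inter_Union_psi_preimage_le[OF p c(1) deg, of "Uset_pieces d e B D"] c(2)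
    unfolding Uset_eq_Union_pieces by blast
  moreover have "d * sum_list (map fst (Uset_pieces d e B D)) \<le> 2 * d ^ 2"
    using sum_list_Uset_pieces_le[OF e] by (simp add: power2_eq_square)
  ultimately show ?thesis by linarith
qed

lemma totdeg_le_if_zero_set_eq_infinite:
  assumes p: "irreducible p" and q: "q \<noteq> 0"
    and eq: "zero_set p = zero_set q" and inf: "infinite (zero_set q)"
  shows "totdeg p \<le> totdeg q"
proof -
  have "p dvd q"
  proof (rule ccontr)
    assume "\<not> p dvd q"
    then have "finite (zero_set p \<inter> zero_set q)" by (rule bezout(1)[OF p])
    then show False using eq inf by simp
  qed
  then show ?thesis using totdeg_dvd_le q by blast
qed

theorem lemma27:
  fixes d f :: nat and C0 B :: "(real \<times> real) set"
  assumes "d \<ge> 1" and "f \<le> d - 1"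
    and "C0 \<in> curves_le d" and "irreducible_curve C0"
    and "finite B" and "card B \<le> ((d + 2) choose 2) - 1"
  shows "\<forall>(e, D) \<in> Iset d B C0. finite (C0 \<inter> Uset d e B D) \<and>
           card (C0 \<inter> Uset d e B D) \<le> 2 * d ^ 2"
proof (intro ballI, clarify)
  fix e D assume "(e, D) \<in> Iset d B C0"
  then have e: "e \<le> d" and "\<not> C0 \<subseteq> Uset d e B D"
    unfolding Iset_def by auto
  then obtain c where c: "c \<in> C0" "c \<notin> Uset d e B D" by blast
  obtain q where q: "q \<noteq> 0" "totdeg q \<le> d" "C0 = zero_set q"
    using assms(3) unfolding curves_le_def curves_deg_def by auto
  obtain p where p: "irreducible p" "C0 = zero_set p"
    using assms(4) unfolding irreducible_curve_def by auto
  show "finite (C0 \<inter> Uset d e B D) \<and> card (C0 \<inter> Uset d e B D) \<le> 2 * d ^ 2"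
  proof (cases "finite C0")
    case True
    have "card (C0 \<inter> Uset d e B D) \<le> card C0" using True by (rule card_mono) auto
    also have "\<dots> \<le> totdeg q ^ 2" using card_zero_set_le[OF q(1)] True by (simp add: q(3))
    also have "\<dots> \<le> 2 * d ^ 2" using power_mono[OF q(2), of 2] by linarith
    finally show ?thesis using True by simp
  next
    case False
    have "totdeg p \<le> totdeg q"
      using False by (intro totdeg_le_if_zero_set_eq_infinite[OF p(1) q(1)]) (simp_all flip: p(2) q(3))
    then show ?thesis
      unfolding p(2) using card_curve_inter_Uset_le[OF p(1) c[unfolded p(2)] _ e] q(2) by simp
  qed
qed

end
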